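(* For every $d\ge1$, $H_d\le d!$.
   Context: A sublattice $\Lambda'$ of a $d$-dimensional lattice $\Lambda$ is hollow if it is generated by $d$ linearly independent elements $v_1,\dots,v_d\in\Lambda$ such that the interior of the convex hull of $\pm v_1,\dots,\pm v_d$ contains no nonzero element of $\Lambda$. $H_d$ denotes the maximal index $[\Lambda:\Lambda']$ of a hollow sublattice $\Lambda'$ of a $d$-dimensional lattice $\Lambda$. *)

theory Defs
  imports "HOL-Analysis.Analysis"
begin

definition int_span :: "('n::finite \<Rightarrow> real^'n) \<Rightarrow> (real^'n) set" where
  "int_span v = range (\<lambda>z::'n \<Rightarrow> int. \<Sum>i\<in>UNIV. of_int (z i) *\<^sub>R v i)"

definition lin_indep_family :: "('n::finite \<Rightarrow> real^'n) \<Rightarrow> bool" where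
  "lin_indep_family v \<longleftrightarrow> inj v \<and> independent (range v)"

definition is_lattice :: "(real^'n::finite) set \<Rightarrow> bool" where
  "is_lattice L \<longleftrightarrow> (\<exists>b. lin_indep_family b \<and> L = int_span b)"

definition hollow_sublattice :: "(real^'n::finite) set \<Rightarrow> (real^'n) set \<Rightarrow> bool" where
  "hollow_sublattice L L' \<longleftrightarrow>
     (\<exists>v. lin_indep_family v \<and> range v \<subseteq> L \<and> L' = int_span v \<and>
          (\<forall>x\<in>L. x \<in> interior (convex hull (range v \<union> range (\<lambda>i. - v i))) \<longrightarrow> x = 0))"

definition lattice_index :: "(real^'n::finite) set \<Rightarrow> (real^'n) set \<Rightarrow> nat" where
  "lattice_index L L' = card {(\<lambda>y. x + y) ` L' | x. x \<in> L}"

end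

theory Submission
  imports Defs "HOL-Real_Asymp.Real_Asymp"
begin

text \<open>
  Write points in coordinates with respect to generators \<open>v\<^sub>1, \<dots>, v\<^sub>d\<close> of the hollow
  sublattice \<open>L'\<close>. A point of \<open>L\<close> whose coordinate vector has \<open>\<ell>\<^sub>1\<close>-norm less than 1 lies in
  the interior of the cross-polytope \<open>conv(\<plusminus>v\<^sub>i)\<close>, so hollowness forces it to be 0. Hence the
  coordinate vectors of representatives of distinct cosets of \<open>L'\<close> in \<open>L\<close> stay at \<open>\<ell>\<^sub>1\<close>-distance
  at least 1 after any integer shift, and the open \<open>\<ell>\<^sub>1\<close>-balls of radius 1/2 around them and
  all their integer translates are pairwise disjoint. Counting these balls inside large cubes
  gives \<open>[L : L'] \<cdot> vol \<le> 1\<close>, and that ball has volume \<open>1/d!\<close>: it contains \<open>2\<^sup>d\<close> reflected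
  copies of a simplex of volume arbitrarily close to \<open>(1/2)\<^sup>d/d!\<close>.
\<close>

definition l1_norm :: "real^'n::finite \<Rightarrow> real" where
  "l1_norm y = (\<Sum>i\<in>UNIV. \<bar>y$i\<bar>)"

definition l1_ball :: "real \<Rightarrow> (real^'n::finite) set" where
  "l1_ball r = {y. l1_norm y < r}"

lemma bounded_l1_ball: "bounded (l1_ball r :: (real^'n::finite) set)"
proof (rule bounded_subset[OF bounded_cball])
  show "l1_ball r \<subseteq> cball (0::real^'n) \<bar>r\<bar>"
  proof
    fix y :: "real^'n" assume "y \<in> l1_ball r"
    then show "y \<in> cball 0 \<bar>r\<bar>"
      using norm_le_l1_cart[of y] by (simp add: l1_ball_def l1_norm_def)
  qed
qed

lemma l1_ball_lmeasurable: "l1_ball r \<in> lmeasurable"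
proof (rule lmeasurable_open[OF bounded_l1_ball])
  show "open (l1_ball r :: (real^'n) set)"
    unfolding l1_ball_def l1_norm_def by (intro open_Collect_less) (auto intro!: continuous_intros)
qed

lemma l1_norm_diff_le: "l1_norm (x - y) \<le> l1_norm x + l1_norm y"
  unfolding l1_norm_def sum.distrib[symmetric] by (intro sum_mono) (simp add: abs_triangle_ineq4)

definition sign_flip :: "('n::finite \<Rightarrow> real) \<Rightarrow> real^'n \<Rightarrow> real^'n" where
  "sign_flip s x = (\<chi> i. s i * x$i)"

lemma
  fixes s :: "'n::finite \<Rightarrow> real"
  assumes s: "\<And>i. \<bar>s i\<bar> = 1" and X: "X \<in> lmeasurable"
  shows lmeasurable_sign_flip_vimage: "sign_flip s -` X \<in> lmeasurable"
    and measure_sign_flip_vimage: "measure lebesgue (sign_flip s -` X) = measure lebesgue X"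
proof -
  define c where "c j = j \<bullet> (\<chi> i. s i)" for j :: "real^'n"
  define T where "T x = (\<Sum>j\<in>Basis. (c j * (x \<bullet> j)) *\<^sub>R j)" for x :: "real^'n"
  have c_axis: "c (axis k 1) = s k" for k
    by (simp add: c_def inner_axis')
  have abs_c: "\<bar>c j\<bar> = 1" if "j \<in> Basis" for j
    using that s by (auto simp: Basis_vec_def c_axis)
  have T_eq: "T = sign_flip s"
  proof
    fix x
    have "sign_flip s x = (\<Sum>j\<in>Basis. (sign_flip s x \<bullet> j) *\<^sub>R j)"
      by (simp add: euclidean_representation)
    also have "\<dots> = T x"
      unfolding T_def
      by (intro sum.cong) (auto simp: sign_flip_def Basis_vec_def c_axis cart_eq_inner_axis[symmetric])
    finally show "T x = sign_flip s x" ..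
  qed
  have c_nonzero: "\<And>j. j \<in> Basis \<Longrightarrow> c j \<noteq> 0"
    using abs_c by fastforce
  have "lebesgue = density (distr lebesgue lebesgue T) (\<lambda>_. \<Prod>j\<in>Basis. \<bar>c j\<bar>)"
    and T_meas: "T \<in> lebesgue \<rightarrow>\<^sub>M lebesgue"
    using lebesgue_affine_euclidean[OF c_nonzero, where t=0]
      lebesgue_affine_measurable[OF c_nonzero, where t=0]
    by (simp_all add: T_def[abs_def])
  then have "lebesgue = distr lebesgue lebesgue T"
    by (simp add: abs_c density_1)
  then have "emeasure lebesgue (T -` X) = emeasure lebesgue X"
    using emeasure_distr[OF T_meas fmeasurableD[OF X]] by simp
  moreover have "T -` X \<in> sets lebesgue"
    using measurable_sets[OF T_meas fmeasurableD[OF X]] by simp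
  ultimately show "sign_flip s -` X \<in> lmeasurable"
    and "measure lebesgue (sign_flip s -` X) = measure lebesgue X"
    using X by (auto simp: T_eq fmeasurable_def measure_def)
qed

lemma sign_flip_vimage_disjoint:
  assumes P: "\<And>y i. y \<in> P \<Longrightarrow> 0 < y$i"
    and s: "\<And>i. \<bar>s i\<bar> = 1" and t: "\<And>i. \<bar>t i\<bar> = 1" and "s \<noteq> t"
  shows "sign_flip s -` P \<inter> sign_flip t -` P = {}"
proof safe
  obtain i where "s i \<noteq> t i"
    using \<open>s \<noteq> t\<close> by auto
  then have "t i = - s i"
    using s[of i] t[of i] by arith
  fix y assume "sign_flip s y \<in> P" "sign_flip t y \<in> P"
  then have "0 < sign_flip s y $ i" "0 < sign_flip t y $ i"
    using P by blast+
  then show "y \<in> {}"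
    using \<open>t i = - s i\<close> by (simp add: sign_flip_def)
qed

lemma l1_norm_eq_sum_sign_flip:
  assumes s: "\<And>i. \<bar>s i\<bar> = 1" and pos: "\<And>i. 0 < sign_flip s y $ i"
  shows "l1_norm y = (\<Sum>i\<in>UNIV. sign_flip s y $ i)"
proof -
  have "\<bar>y$i\<bar> = sign_flip s y $ i" for i
  proof -
    have "\<bar>y$i\<bar> = \<bar>sign_flip s y $ i\<bar>"
      using s[of i] by (simp add: sign_flip_def abs_mult)
    also have "\<dots> = sign_flip s y $ i"
      using pos[of i] by simp
    finally show ?thesis .
  qed
  then show ?thesis
    by (simp add: l1_norm_def)
qed

lemma two_power_measure_le_l1_ball:
  fixes P :: "(real^'n::finite) set"
  assumes "P \<in> lmeasurable" and P: "\<And>y. y \<in> P \<Longrightarrow> (\<forall>i. 0 < y$i) \<and> (\<Sum>i\<in>UNIV. y$i) < r"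
  shows "2 ^ CARD('n) * measure lebesgue P \<le> measure lebesgue (l1_ball r :: (real^'n) set)"
proof -
  define signs where "signs = PiE UNIV (\<lambda>_::'n. {1::real, -1})"
  have signs_abs: "\<bar>s i\<bar> = 1" if "s \<in> signs" for s i
  proof -
    have "s i \<in> {1, -1}"
      using that by (simp add: signs_def PiE_iff)
    then show ?thesis
      by auto
  qed
  have "finite signs" "card signs = 2 ^ CARD('n)"
    by (simp_all add: signs_def finite_PiE card_PiE numeral_2_eq_2)
  have flip_lmeasurable: "sign_flip s -` P \<in> lmeasurable" if "s \<in> signs" for s
    using signs_abs[OF that] \<open>P \<in> lmeasurable\<close> by (rule lmeasurable_sign_flip_vimage)
  have flip_measure: "measure lebesgue (sign_flip s -` P) = measure lebesgue P" if "s \<in> signs" for s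
    using signs_abs[OF that] \<open>P \<in> lmeasurable\<close> by (rule measure_sign_flip_vimage)
  have "disjoint_family_on (\<lambda>s. sign_flip s -` P) signs"
    unfolding disjoint_family_on_def
  proof (intro ballI impI)
    fix s t assume "s \<in> signs" "t \<in> signs" "s \<noteq> t"
    then show "sign_flip s -` P \<inter> sign_flip t -` P = {}"
      using P signs_abs by (intro sign_flip_vimage_disjoint) auto
  qed
  then have "measure lebesgue (\<Union>s\<in>signs. sign_flip s -` P) =
      (\<Sum>s\<in>signs. measure lebesgue (sign_flip s -` P))"
    using \<open>finite signs\<close> flip_lmeasurable fmeasurableD2[OF flip_lmeasurable]
    by (intro measure_finite_Union) (auto simp del: emeasure_completion)
  also have "\<dots> = 2 ^ CARD('n) * measure lebesgue P"
    using \<open>card signs = 2 ^ CARD('n)\<close> by (simp add: flip_measure)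
  finally have "measure lebesgue (\<Union>s\<in>signs. sign_flip s -` P) = 2 ^ CARD('n) * measure lebesgue P" .
  moreover have "(\<Union>s\<in>signs. sign_flip s -` P) \<subseteq> l1_ball r"
    using P signs_abs l1_norm_eq_sum_sign_flip by (fastforce simp: l1_ball_def)
  moreover have "(\<Union>s\<in>signs. sign_flip s -` P) \<in> sets lebesgue"
    using \<open>finite signs\<close> flip_lmeasurable by blast
  ultimately show ?thesis
    using measure_mono_fmeasurable[OF _ _ l1_ball_lmeasurable] by metis
qed

lemma std_simplex_cart:
  "convex hull (insert 0 Basis) = {x::real^'n::finite. (\<forall>i. 0 \<le> x$i) \<and> (\<Sum>i\<in>UNIV. x$i) \<le> 1}"
proof -
  have inj: "inj (\<lambda>i::'n. axis i (1::real))"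
    by (auto simp: inj_on_def axis_eq_axis)
  have Basis_eq: "(Basis :: (real^'n) set) = range (\<lambda>i. axis i 1)"
    by (auto simp: Basis_vec_def)
  have "(\<Sum>j\<in>Basis. x \<bullet> j) = (\<Sum>i\<in>UNIV. x$i)" for x :: "real^'n"
    unfolding Basis_eq sum.reindex[OF inj] by (simp add: cart_eq_inner_axis)
  then show ?thesis
    unfolding std_simplex by (auto simp: Basis_vec_def cart_eq_inner_axis)
qed

lemma scaled_std_simplex:
  fixes m \<epsilon> :: real
  assumes "0 \<le> m"
  defines "P \<equiv> (\<lambda>x. m *\<^sub>R x + (\<chi> i. \<epsilon>)) ` (convex hull (insert 0 Basis)) :: (real^'n::finite) set"
  shows "P \<in> lmeasurable" "measure lebesgue P = m ^ CARD('n) / fact CARD('n)"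
    and "y \<in> P \<Longrightarrow> (\<forall>i. \<epsilon> \<le> y$i) \<and> (\<Sum>i\<in>UNIV. y$i) \<le> m + real CARD('n) * \<epsilon>"
proof -
  define S :: "(real^'n) set" where "S = convex hull (insert 0 Basis)"
  have "compact S"
    unfolding S_def by (intro finite_imp_compact_convex_hull) auto
  then show "P \<in> lmeasurable"
    unfolding P_def S_def[symmetric] by (intro lmeasurable_compact compact_continuous_image continuous_intros)
  have "measure lebesgue S = 1 / fact CARD('n)"
    using measure_completion[of S lborel] compact_imp_closed[OF \<open>compact S\<close>]
      content_std_simplex[where 'a="real^'n"]
    by (simp add: S_def)
  then show "measure lebesgue P = m ^ CARD('n) / fact CARD('n)"
    using measure_lebesgue_affine[of m "\<chi> i. \<epsilon>" S] assms(1) by (simp add: P_def S_def)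
  assume "y \<in> P"
  then obtain x where x: "\<forall>i. 0 \<le> x$i" "(\<Sum>i\<in>UNIV. x$i) \<le> 1" and y: "y = m *\<^sub>R x + (\<chi> i. \<epsilon>)"
    by (auto simp: P_def std_simplex_cart)
  have "(\<Sum>i\<in>UNIV. y$i) = m * (\<Sum>i\<in>UNIV. x$i) + real CARD('n) * \<epsilon>"
    by (simp add: y sum.distrib sum_distrib_left)
  also have "\<dots> \<le> m + real CARD('n) * \<epsilon>"
    using x(2) assms(1) mult_left_le[of "\<Sum>i\<in>UNIV. x$i" m] by linarith
  finally show "(\<forall>i. \<epsilon> \<le> y$i) \<and> (\<Sum>i\<in>UNIV. y$i) \<le> m + real CARD('n) * \<epsilon>"
    using x(1) assms(1) by (simp add: y)
qed

lemma measure_l1_ball_ge_of_less: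
  fixes m r :: real
  assumes "0 < m" "m < r"
  shows "(2 * m) ^ CARD('n) / fact CARD('n) \<le> measure lebesgue (l1_ball r :: (real^'n::finite) set)"
proof -
  define \<epsilon> where "\<epsilon> = (r - m) / (real CARD('n) + 1)"
  \<comment> \<open>the shift by \<open>\<epsilon>\<close> moves the simplex into the open positive orthant\<close>
  define P :: "(real^'n) set" where "P = (\<lambda>x. m *\<^sub>R x + (\<chi> i. \<epsilon>)) ` (convex hull (insert 0 Basis))"
  have "0 < \<epsilon>"
    using assms by (simp add: \<epsilon>_def)
  have "(real CARD('n) + 1) * \<epsilon> = r - m"
    by (simp add: \<epsilon>_def)
  then have "real CARD('n) * \<epsilon> + \<epsilon> = r - m"
    by (simp add: distrib_right)
  have "(\<forall>i. 0 < y$i) \<and> (\<Sum>i\<in>UNIV. y$i) < r" if "y \<in> P" for y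
    using scaled_std_simplex(3)[of m y \<epsilon>] that assms \<open>0 < \<epsilon>\<close> \<open>real CARD('n) * \<epsilon> + \<epsilon> = r - m\<close>
    by (simp add: P_def) (meson less_le_trans)
  then have "2 ^ CARD('n) * measure lebesgue P \<le> measure lebesgue (l1_ball r :: (real^'n) set)"
    using scaled_std_simplex(1)[of m \<epsilon>] assms unfolding P_def by (intro two_power_measure_le_l1_ball) auto
  then show ?thesis
    using scaled_std_simplex(2)[where 'n='n, of m \<epsilon>] assms by (simp add: P_def power_mult_distrib)
qed

lemma measure_l1_ball_ge:
  fixes r :: real
  assumes "0 < r"
  shows "(2 * r) ^ CARD('n) / fact CARD('n) \<le> measure lebesgue (l1_ball r :: (real^'n::finite) set)"
proof -
  have lim: "((\<lambda>m. (2 * m) ^ CARD('n) / fact CARD('n)) \<longlongrightarrow> (2 * r) ^ CARD('n) / fact CARD('n)) (at_left r)"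
    by (intro tendsto_divide tendsto_power tendsto_mult tendsto_const tendsto_ident_at) simp
  have "\<forall>\<^sub>F m in at_left r. m \<in> {0<..<r}"
    using eventually_at_left_real[OF assms] .
  then have "\<forall>\<^sub>F m in at_left r. (2 * m) ^ CARD('n) / fact CARD('n) \<le> measure lebesgue (l1_ball r :: (real^'n) set)"
    by (rule eventually_mono) (rule measure_l1_ball_ge_of_less; simp)
  with lim show ?thesis
    by (rule tendsto_upperbound) simp
qed

definition int_vec :: "('n::finite \<Rightarrow> int) \<Rightarrow> real^'n" where
  "int_vec z = (\<chi> i. of_int (z i))"

lemma int_vec_diff: "int_vec (z - w) = int_vec z - int_vec w"
  by (simp add: int_vec_def vec_eq_iff)

lemma int_vec_uminus: "int_vec (- z) = - int_vec z"
  by (simp add: int_vec_def vec_eq_iff)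

lemma card_int_cube:
  "card (PiE UNIV (\<lambda>_::'n::finite. {- int K..int K})) = (2 * K + 1) ^ CARD('n)"
  by (simp add: card_PiE nat_add_distrib nat_mult_distrib)

lemma measure_cube_cart:
  assumes "0 \<le> c"
  shows "measure lebesgue (cbox (\<chi> i. - c) (\<chi> i. c) :: (real^'n::finite) set) = (2 * c) ^ CARD('n)"
proof -
  have "(\<chi> i. - c) \<in> (cbox (\<chi> i. - c) (\<chi> i. c) :: (real^'n) set)"
    using assms by (simp add: mem_box_cart)
  then have "cbox (\<chi> i. - c) (\<chi> i. c) \<noteq> ({} :: (real^'n) set)"
    by blast
  then show ?thesis
    by (simp add: content_cbox_cart)
qed

lemma lattice_translate_subset_cube:
  assumes R: "\<And>y i. y \<in> D \<Longrightarrow> \<bar>(a + y)$i\<bar> \<le> R"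
    and z: "z \<in> PiE UNIV (\<lambda>_. {- int K..int K})"
  shows "(+) (a + int_vec z) ` D \<subseteq> cbox (\<chi> i. - (R + real K)) (\<chi> i. R + real K)"
proof clarify
  fix y assume "y \<in> D"
  have "\<bar>(a + int_vec z + y)$i\<bar> \<le> R + real K" for i
  proof -
    have "z i \<in> {- int K..int K}"
      using z by (simp add: PiE_iff)
    then have "\<bar>z i\<bar> \<le> int K"
      by auto
    then have "\<bar>int_vec z $ i\<bar> \<le> real K"
      by (simp add: int_vec_def)
    then show ?thesis
      using R[OF \<open>y \<in> D\<close>, of i] by simp
  qed
  then have "- (R + real K) \<le> (a + int_vec z + y)$i \<and> (a + int_vec z + y)$i \<le> R + real K" for i
    by (metis abs_le_iff minus_le_iff)
  then show "a + int_vec z + y \<in> cbox (\<chi> i. - (R + real K)) (\<chi> i. R + real K)"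
    by (simp add: mem_box_cart)
qed

lemma disjoint_translates_box_bound:
  fixes A D :: "(real^'n::finite) set"
  assumes "finite A" "D \<in> lmeasurable"
    and disj: "disjoint_family_on (\<lambda>(a, z). (+) (a + int_vec z) ` D) (A \<times> UNIV)"
    and R: "0 \<le> R" "\<And>a y i. a \<in> A \<Longrightarrow> y \<in> D \<Longrightarrow> \<bar>(a + y)$i\<bar> \<le> R"
  shows "real (card A) * (2 * real K + 1) ^ CARD('n) * measure lebesgue D \<le> (2 * (R + real K)) ^ CARD('n)"
proof -
  define Z where "Z = PiE UNIV (\<lambda>_::'n. {- int K..int K})"
  define F where "F = (\<lambda>(a, z). (+) (a + int_vec z) ` D)"
  define Q :: "(real^'n) set" where "Q = cbox (\<chi> i. - (R + real K)) (\<chi> i. R + real K)"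
  have "finite Z"
    by (simp add: Z_def finite_PiE)
  have F_lmeasurable: "F p \<in> lmeasurable" for p
    using assms(2) by (auto simp: F_def split: prod.splits intro: measurable_translation)
  have F_measure: "measure lebesgue (F p) = measure lebesgue D" for p
    by (auto simp: F_def measure_translation split: prod.splits)
  have "real (card (A \<times> Z)) = real (card A) * (2 * real K + 1) ^ CARD('n)"
    using card_int_cube[where 'n='n, of K] by (simp add: Z_def card_cartesian_product add.commute)
  then have "real (card A) * (2 * real K + 1) ^ CARD('n) * measure lebesgue D =
      (\<Sum>p\<in>A \<times> Z. measure lebesgue (F p))"
    by (simp add: F_measure)
  also have "\<dots> = measure lebesgue (\<Union>p\<in>A \<times> Z. F p)"
    using \<open>finite A\<close> \<open>finite Z\<close> disjoint_family_on_mono[OF _ disj, of "A \<times> Z"] F_lmeasurable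
      fmeasurableD2[OF F_lmeasurable]
    by (intro measure_finite_Union[symmetric]) (auto simp: F_def simp del: emeasure_completion)
  also have "\<dots> \<le> measure lebesgue Q"
  proof (rule measure_mono_fmeasurable)
    show "(\<Union>p\<in>A \<times> Z. F p) \<subseteq> Q"
      using lattice_translate_subset_cube[OF R(2)] by (force simp: F_def Q_def Z_def)
    show "(\<Union>p\<in>A \<times> Z. F p) \<in> sets lebesgue"
      using \<open>finite A\<close> \<open>finite Z\<close> F_lmeasurable by blast
  qed (simp add: Q_def)
  also have "\<dots> = (2 * (R + real K)) ^ CARD('n)"
    using measure_cube_cart[of "R + real K"] R(1) by (simp add: Q_def)
  finally show ?thesis .
qed

lemma disjoint_lattice_translates_measure_le:
  fixes A D :: "(real^'n::finite) set"
  assumes "finite A" "bounded D" "D \<in> lmeasurable"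
    and disj: "disjoint_family_on (\<lambda>(a, z). (+) (a + int_vec z) ` D) (A \<times> UNIV)"
  shows "real (card A) * measure lebesgue D \<le> 1"
proof -
  obtain C where C: "\<And>a y. a \<in> A \<Longrightarrow> y \<in> D \<Longrightarrow> norm (a + y) \<le> C"
    using bounded_plus[OF finite_imp_bounded[OF \<open>finite A\<close>] \<open>bounded D\<close>] by (auto simp: bounded_iff)
  define R where "R = max C 0"
  have R: "0 \<le> R" "\<bar>(a + y)$i\<bar> \<le> R" if "a \<in> A" "y \<in> D" for a y i
    using that C[of a y] component_le_norm_cart[of "a + y" i] by (force simp: R_def)+
  have bound: "real (card A) * measure lebesgue D \<le> ((2 * R + 2 * real K) / (2 * real K + 1)) ^ CARD('n)"
    for K :: nat
  proof -
    have "real (card A) * measure lebesgue D * (2 * real K + 1) ^ CARD('n) \<le> (2 * (R + real K)) ^ CARD('n)"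
      using disjoint_translates_box_bound[OF assms(1,3) disj, of R K] R by (auto simp: R_def ac_simps)
    then show ?thesis
      by (simp add: power_divide pos_le_divide_eq algebra_simps)
  qed
  have "(\<lambda>K. (2 * R + 2 * real K) / (2 * real K + 1)) \<longlonglongrightarrow> 1"
    by real_asymp
  then have "(\<lambda>K. ((2 * R + 2 * real K) / (2 * real K + 1)) ^ CARD('n)) \<longlonglongrightarrow> 1"
    using tendsto_power by fastforce
  then show ?thesis
    using bound by (intro LIMSEQ_le_const) auto
qed

lemma one_le_l1_norm_int_vec:
  assumes "z \<noteq> (\<lambda>_. 0)"
  shows "1 \<le> l1_norm (int_vec z)"
proof -
  obtain i where "z i \<noteq> 0"
    using assms by auto
  then have "1 \<le> \<bar>int_vec z $ i\<bar>"
    by (simp add: int_vec_def)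
  also have "\<dots> \<le> l1_norm (int_vec z)"
    unfolding l1_norm_def by (rule member_le_sum) auto
  finally show ?thesis .
qed

lemma l1_separated_translates_disjoint:
  fixes A :: "(real^'n::finite) set"
  assumes sep: "\<And>a b z. a \<in> A \<Longrightarrow> b \<in> A \<Longrightarrow> a \<noteq> b \<Longrightarrow> 1 \<le> l1_norm (a - b + int_vec z)"
  shows "disjoint_family_on (\<lambda>(a, z). (+) (a + int_vec z) ` l1_ball (1/2)) (A \<times> UNIV)"
proof -
  have "a = b \<and> z = w"
    if "a \<in> A" "b \<in> A" "x \<in> l1_ball (1/2)" "y \<in> l1_ball (1/2)"
      and eq: "a + int_vec z + x = b + int_vec w + y" for a b z w x y
  proof -
    have "a - b + int_vec (z - w) = y - x"
      using eq by (simp add: int_vec_diff algebra_simps)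
    then have lt: "l1_norm (a - b + int_vec (z - w)) < 1"
      using l1_norm_diff_le[of y x] that(3,4) by (simp add: l1_ball_def)
    then have "a = b"
      using sep[OF that(1,2), of "z - w"] lt by fastforce
    moreover have "z - w = (\<lambda>_. 0)"
      using one_le_l1_norm_int_vec[of "z - w"] lt \<open>a = b\<close> by force
    ultimately show ?thesis
      by (simp add: fun_eq_iff)
  qed
  then show ?thesis
    unfolding disjoint_family_on_def by fastforce
qed

lemma card_le_fact_if_l1_separated:
  fixes A :: "(real^'n::finite) set"
  assumes "finite A"
    and sep: "\<And>a b z. a \<in> A \<Longrightarrow> b \<in> A \<Longrightarrow> a \<noteq> b \<Longrightarrow> 1 \<le> l1_norm (a - b + int_vec z)"
  shows "card A \<le> fact CARD('n)"
proof -
  have "real (card A) * measure lebesgue (l1_ball (1/2) :: (real^'n) set) \<le> 1"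
    using assms by (intro disjoint_lattice_translates_measure_le bounded_l1_ball l1_ball_lmeasurable
      l1_separated_translates_disjoint)
  moreover have "1 / fact CARD('n) \<le> measure lebesgue (l1_ball (1/2) :: (real^'n) set)"
    using measure_l1_ball_ge[of "1/2"] by simp
  then have "real (card A) / fact CARD('n) \<le> real (card A) * measure lebesgue (l1_ball (1/2) :: (real^'n) set)"
    using mult_left_mono[of "1 / fact CARD('n)" _ "real (card A)"] by simp
  ultimately have "real (card A) / fact CARD('n) \<le> 1"
    by linarith
  then have "real (card A) \<le> fact CARD('n)"
    by (simp add: divide_le_eq)
  then show ?thesis
    by (metis of_nat_fact of_nat_le_iff)
qed

lemma int_span_memI: "x = (\<Sum>i\<in>UNIV. of_int (z i) *\<^sub>R b i) \<Longrightarrow> x \<in> int_span b"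
  unfolding int_span_def by blast

lemma int_span_add:
  assumes "x \<in> int_span b" "y \<in> int_span b"
  shows "x + y \<in> int_span b"
proof -
  obtain z w where "x = (\<Sum>i\<in>UNIV. of_int (z i) *\<^sub>R b i)" "y = (\<Sum>i\<in>UNIV. of_int (w i) *\<^sub>R b i)"
    using assms by (auto simp: int_span_def)
  then have "x + y = (\<Sum>i\<in>UNIV. of_int (z i + w i) *\<^sub>R b i)"
    by (simp add: sum.distrib scaleR_add_left)
  then show ?thesis
    by (rule int_span_memI)
qed

lemma int_span_diff:
  assumes "x \<in> int_span b" "y \<in> int_span b"
  shows "x - y \<in> int_span b"
proof -
  obtain z w where "x = (\<Sum>i\<in>UNIV. of_int (z i) *\<^sub>R b i)" "y = (\<Sum>i\<in>UNIV. of_int (w i) *\<^sub>R b i)"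
    using assms by (auto simp: int_span_def)
  then have "x - y = (\<Sum>i\<in>UNIV. of_int (z i - w i) *\<^sub>R b i)"
    by (simp add: sum_subtractf scaleR_diff_left)
  then show ?thesis
    by (rule int_span_memI)
qed

lemma int_span_subset:
  assumes "range v \<subseteq> int_span b"
  shows "int_span v \<subseteq> int_span b"
proof
  fix x assume "x \<in> int_span v"
  then obtain z where x: "x = (\<Sum>i\<in>UNIV. of_int (z i) *\<^sub>R v i)"
    by (auto simp: int_span_def)
  have "(\<Sum>i\<in>I. of_int (z i) *\<^sub>R v i) \<in> int_span b" if "finite I" for I
    using that
  proof (induction rule: finite_induct)
    case empty
    show ?case
      by (rule int_span_memI[of _ "\<lambda>_. 0"]) simp
  next
    case (insert i I)
    obtain w where "v i = (\<Sum>j\<in>UNIV. of_int (w j) *\<^sub>R b j)"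
      using assms by (auto simp: int_span_def)
    then have "of_int (z i) *\<^sub>R v i = (\<Sum>j\<in>UNIV. of_int (z i * w j) *\<^sub>R b j)"
      by (simp add: scaleR_sum_right)
    then have "of_int (z i) *\<^sub>R v i \<in> int_span b"
      by (rule int_span_memI)
    then show ?case
      using insert by (simp add: int_span_add)
  qed
  then show "x \<in> int_span b"
    by (simp add: x)
qed

lemma int_span_translate_eq:
  assumes "x - y \<in> int_span v"
  shows "(+) x ` int_span v = (+) y ` int_span v"
proof -
  have "(+) x ` int_span v \<subseteq> (+) y ` int_span v" if "x - y \<in> int_span v" for x y
  proof
    fix u assume "u \<in> (+) x ` int_span v"
    then obtain w where w: "w \<in> int_span v" "u = x + w"
      by blast
    then have "(x - y) + w \<in> int_span v"
      using that by (simp add: int_span_add)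
    then show "u \<in> (+) y ` int_span v"
      by (rule rev_image_eqI) (simp add: w)
  qed
  moreover have "y - x \<in> int_span v"
    using int_span_diff[OF _ assms, of 0] int_span_diff[OF assms assms] by simp
  ultimately show ?thesis
    using assms by blast
qed

definition lin_comb :: "('n::finite \<Rightarrow> 'a::real_vector) \<Rightarrow> real^'n \<Rightarrow> 'a" where
  "lin_comb v c = (\<Sum>i\<in>UNIV. c$i *\<^sub>R v i)"

lemma linear_lin_comb: "linear (lin_comb v)"
  unfolding lin_comb_def
  by (intro linearI) (auto simp: sum.distrib scaleR_add_left scaleR_sum_right)

lemma lin_comb_int_vec: "lin_comb v (int_vec z) \<in> int_span v"
  by (rule int_span_memI) (simp add: lin_comb_def int_vec_def)

lemma bij_lin_comb:
  assumes "lin_indep_family v"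
  shows "bij (lin_comb v)"
proof -
  have inj_v: "inj v" and indep: "independent (range v)"
    using assms by (auto simp: lin_indep_family_def)
  have "c = 0" if "lin_comb v c = 0" for c
  proof (rule ccontr)
    assume "c \<noteq> 0"
    then obtain j where "c$j \<noteq> 0"
      by (auto simp: vec_eq_iff)
    define u where "u w = c $ inv v w" for w
    have "(\<Sum>w\<in>range v. u w *\<^sub>R w) = lin_comb v c"
      using inj_v by (simp add: sum.reindex u_def lin_comb_def)
    moreover have "u (v j) \<noteq> 0"
      using inj_v \<open>c$j \<noteq> 0\<close> by (simp add: u_def)
    ultimately have "dependent (range v)"
      using that by (subst dependent_finite) auto
    then show False
      using indep by simp
  qed
  then have "inj (lin_comb v)"
    by (simp add: linear_injective_0[OF linear_lin_comb])
  then show ?thesis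
    using linear_lin_comb linear_injective_imp_surjective by (auto simp: bij_def)
qed

definition cross_polytope :: "('n::finite \<Rightarrow> 'a::real_vector) \<Rightarrow> 'a set" where
  "cross_polytope v = convex hull (range v \<union> range (\<lambda>i. - v i))"

lemma convex_cross_polytope: "convex (cross_polytope v)"
  by (simp add: cross_polytope_def)

lemma vertices_in_cross_polytope: "v i \<in> cross_polytope v" "- v i \<in> cross_polytope v"
  by (auto simp: cross_polytope_def intro: hull_inc)

lemma zero_in_cross_polytope: "0 \<in> cross_polytope v"
proof -
  have "(1/2) *\<^sub>R v i + (1/2) *\<^sub>R (- v i) \<in> cross_polytope v" for i
    using convex_cross_polytope vertices_in_cross_polytope by (intro convexD) auto
  then show ?thesis
    by simp
qed

lemma lin_comb_in_cross_polytope: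
  assumes "l1_norm c \<le> 1"
  shows "lin_comb v c \<in> cross_polytope v"
proof (cases "c = 0")
  case True
  then show ?thesis
    using zero_in_cross_polytope by (simp add: lin_comb_def)
next
  case False
  define t where "t = l1_norm c"
  define w where "w i = (if 0 \<le> c$i then v i else - v i)" for i
  have "0 < t"
    using False by (auto simp: t_def l1_norm_def vec_eq_iff intro!: sum_pos2)
  have "(\<Sum>i\<in>UNIV. (\<bar>c$i\<bar> / t) *\<^sub>R w i) \<in> cross_polytope v"
  proof (rule convex_sum[OF _ convex_cross_polytope])
    show "(\<Sum>i\<in>UNIV. \<bar>c$i\<bar> / t) = 1"
      using \<open>0 < t\<close> by (simp add: sum_divide_distrib[symmetric] t_def l1_norm_def)
  qed (use \<open>0 < t\<close> vertices_in_cross_polytope in \<open>auto simp: w_def\<close>)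
  then have "t *\<^sub>R (\<Sum>i\<in>UNIV. (\<bar>c$i\<bar> / t) *\<^sub>R w i) + (1 - t) *\<^sub>R 0 \<in> cross_polytope v"
    using zero_in_cross_polytope convex_cross_polytope \<open>0 < t\<close> assms
    by (intro convexD) (auto simp: t_def)
  moreover have "c$i *\<^sub>R v i = \<bar>c$i\<bar> *\<^sub>R w i" for i
    by (simp add: w_def)
  ultimately show ?thesis
    using \<open>0 < t\<close> by (simp add: lin_comb_def scaleR_sum_right)
qed

lemma lin_comb_in_interior_cross_polytope:
  assumes "lin_indep_family v" "l1_norm c < 1"
  shows "lin_comb v c \<in> interior (cross_polytope v)"
proof -
  define U where "U = lin_comb v ` l1_ball 1"
  have "open U"
    unfolding U_def l1_ball_def l1_norm_def using linear_lin_comb bij_lin_comb[OF assms(1)]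
    by (intro open_surjective_linear_image open_Collect_less) (auto simp: bij_def intro!: continuous_intros)
  moreover have "U \<subseteq> cross_polytope v"
    using lin_comb_in_cross_polytope by (force simp: U_def l1_ball_def)
  ultimately have "U \<subseteq> interior (cross_polytope v)"
    by (simp add: interior_maximal)
  then show ?thesis
    using assms(2) by (auto simp: U_def l1_ball_def)
qed

lemma incongruent_coordinates_l1_separated:
  fixes L :: "(real^'n::finite) set"
  assumes v: "lin_indep_family v" "int_span v \<subseteq> L"
    and L_diff: "\<And>x y. x \<in> L \<Longrightarrow> y \<in> L \<Longrightarrow> x - y \<in> L"
    and hollow: "\<And>x. x \<in> L \<Longrightarrow> x \<in> interior (cross_polytope v) \<Longrightarrow> x = 0"
    and xy: "x \<in> L" "y \<in> L" "x - y \<notin> int_span v"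
  shows "1 \<le> l1_norm (inv (lin_comb v) x - inv (lin_comb v) y + int_vec z)"
proof (rule ccontr)
  define co where "co = inv (lin_comb v)"
  have comb_co: "lin_comb v (co u) = u" for u
    using bij_lin_comb[OF v(1)] by (simp add: co_def bij_is_surj surj_f_inv_f)
  define p where "p = x - (y - lin_comb v (int_vec z))"
  have "lin_comb v (int_vec z) \<in> L"
    using v(2) lin_comb_int_vec by blast
  then have "p \<in> L"
    unfolding p_def using xy(1,2) by (intro L_diff)
  have "lin_comb v (co x - co y + int_vec z) = p"
    using linear_lin_comb[of v] by (simp add: comb_co p_def linear_add linear_diff)
  moreover assume "\<not> 1 \<le> l1_norm (inv (lin_comb v) x - inv (lin_comb v) y + int_vec z)"
  ultimately have "p \<in> interior (cross_polytope v)"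
    using lin_comb_in_interior_cross_polytope[OF v(1)] by (fastforce simp: co_def)
  then have "p = 0"
    using hollow[OF \<open>p \<in> L\<close>] by simp
  moreover have "x - y = p - lin_comb v (int_vec z)"
    by (simp add: p_def algebra_simps)
  ultimately have "x - y = lin_comb v (int_vec (- z))"
    by (simp add: int_vec_uminus linear_neg[OF linear_lin_comb])
  then show False
    using lin_comb_int_vec xy(3) by metis
qed

lemma card_incongruent_le_fact:
  fixes L X :: "(real^'n::finite) set"
  assumes v: "lin_indep_family v" "int_span v \<subseteq> L"
    and L_diff: "\<And>x y. x \<in> L \<Longrightarrow> y \<in> L \<Longrightarrow> x - y \<in> L"
    and hollow: "\<And>x. x \<in> L \<Longrightarrow> x \<in> interior (cross_polytope v) \<Longrightarrow> x = 0"
    and X: "finite X" "X \<subseteq> L" "\<And>x y. x \<in> X \<Longrightarrow> y \<in> X \<Longrightarrow> x - y \<in> int_span v \<Longrightarrow> x = y"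
  shows "card X \<le> fact CARD('n)"
proof -
  define co where "co = inv (lin_comb v)"
  have "bij co"
    unfolding co_def using bij_lin_comb[OF v(1)] by (rule bij_imp_bij_inv)
  then have "inj_on co X"
    by (meson bij_is_inj inj_on_subset subset_UNIV)
  moreover have "card (co ` X) \<le> fact CARD('n)"
  proof (rule card_le_fact_if_l1_separated)
    show "finite (co ` X)"
      using X(1) by simp
    fix a b z assume "a \<in> co ` X" "b \<in> co ` X" "a \<noteq> b"
    then obtain x y where xy: "x \<in> X" "y \<in> X" "a = co x" "b = co y" "x \<noteq> y"
      by blast
    then have "x - y \<notin> int_span v"
      using X(3) by blast
    then show "1 \<le> l1_norm (a - b + int_vec z)"
      using incongruent_coordinates_l1_separated[OF v L_diff hollow] xy X(2) by (auto simp: co_def)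
  qed
  ultimately show ?thesis
    by (simp add: card_image)
qed

lemma lattice_index_le:
  fixes L :: "(real^'n::finite) set"
  assumes bound: "\<And>X. finite X \<Longrightarrow> X \<subseteq> L \<Longrightarrow>
      (\<And>x y. x \<in> X \<Longrightarrow> y \<in> X \<Longrightarrow> x - y \<in> int_span v \<Longrightarrow> x = y) \<Longrightarrow> card X \<le> n"
  shows "lattice_index L (int_span v) \<le> n"
proof -
  define cosets where "cosets = {(+) x ` int_span v | x. x \<in> L}"
  have "\<forall>C\<in>cosets. \<exists>x. x \<in> L \<and> C = (+) x ` int_span v"
    by (auto simp: cosets_def)
  then obtain r where r: "\<And>C. C \<in> cosets \<Longrightarrow> r C \<in> L" "\<And>C. C \<in> cosets \<Longrightarrow> C = (+) (r C) ` int_span v"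
    by (metis bchoice)
  show ?thesis
  proof (cases "finite cosets")
    case True
    have "inj_on r cosets"
    proof (rule inj_onI)
      fix C C' assume "C \<in> cosets" "C' \<in> cosets" "r C = r C'"
      then show "C = C'"
        using r(2) by metis
    qed
    moreover have "card (r ` cosets) \<le> n"
    proof (rule bound)
      show "finite (r ` cosets)" "r ` cosets \<subseteq> L"
        using True r(1) by auto
      fix x y assume "x \<in> r ` cosets" "y \<in> r ` cosets" and diff: "x - y \<in> int_span v"
      then obtain C C' where C: "C \<in> cosets" "C' \<in> cosets" "x = r C" "y = r C'"
        by blast
      then have "C = C'"
        using r(2) int_span_translate_eq[OF diff] by metis
      then show "x = y"
        using C by simp
    qed
    ultimately show ?thesis
      by (simp add: lattice_index_def cosets_def[symmetric] card_image)
  qed (simp add: lattice_index_def cosets_def) \<comment> \<open>infinitely many cosets: \<open>card\<close> is 0\<close>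
qed

theorem proposition11p2:
  fixes L L' :: "(real^'n::finite) set"
  assumes "is_lattice L"
    and "hollow_sublattice L L'"
  shows "lattice_index L L' \<le> fact CARD('n)"
proof -
  obtain b where L: "L = int_span b"
    using assms(1) by (auto simp: is_lattice_def)
  obtain v where v: "lin_indep_family v" "range v \<subseteq> L" "L' = int_span v"
    and hollow: "\<And>x. x \<in> L \<Longrightarrow> x \<in> interior (cross_polytope v) \<Longrightarrow> x = 0"
    using assms(2) unfolding hollow_sublattice_def cross_polytope_def by blast
  have L_diff: "x - y \<in> L" if "x \<in> L" "y \<in> L" for x y
    using that by (simp add: L int_span_diff)
  have "int_span v \<subseteq> L"
    using v(2) int_span_subset by (simp add: L)
  show ?thesis
    unfolding v(3) using card_incongruent_le_fact[OF v(1) \<open>int_span v \<subseteq> L\<close> L_diff hollow]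
    by (rule lattice_index_le)
qed

end
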